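(* Let $S$ be a $0$-left cancellative semigroup which is categorical at zero. Then for every $\theta$-constructible set $X\subseteq S'$ there is a right ideal $R$ of $S$ such that $X=R\setminus\{0\}$.
   Context: $S$ is a semigroup with zero $0$; $S'=S\setminus\{0\}$. $S$ is $0$-left cancellative if $st=sr\neq0$ implies $t=r$. $S$ is categorical at zero if for all $r,s,t\in S$, $rs\neq0$ and $st\neq0$ imply $rst\neq0$. For $s\in S$ let $F_s=\{x\in S': sx\neq0\}$, $E_s=sS\setminus\{0\}$, and let $\theta_s:F_s\to E_s$, $\theta_s(x)=sx$ (a bijection, viewed as a partial bijection of $S'$). The inverse hull $\mathcal H(S)$ is the inverse subsemigroup of the symmetric inverse semigroup $\mathcal I(S')$ of all partial bijections of $S'$ generated by $\{\theta_s:s\in S\}$. A subset $X\subseteq S'$ is $\theta$-constructible if the identity map $\mathrm{id}_X$ belongs to $\mathcal H(S)$. A right ideal is a subset $R\subseteq S$ with $RS\subseteq R$ (it contains $0$). *)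

theory Defs
  imports Main
begin

text \<open>A semigroup with zero is modelled as a type of class semigroup_mult and mult_zero
  (0 * a = 0 = a * 0). S' is the set of nonzero elements. Partial bijections of S'
  are partial maps 'a \<rightharpoonup> 'a.\<close>

definition zero_left_cancellative :: "('a::{semigroup_mult,mult_zero}) itself \<Rightarrow> bool" where
  "zero_left_cancellative _ \<longleftrightarrow> (\<forall>s t r :: 'a. s * t = s * r \<and> s * t \<noteq> 0 \<longrightarrow> t = r)"

definition categorical_at_zero :: "('a::{semigroup_mult,mult_zero}) itself \<Rightarrow> bool" where
  "categorical_at_zero _ \<longleftrightarrow> (\<forall>r s t :: 'a. r * s \<noteq> 0 \<and> s * t \<noteq> 0 \<longrightarrow> r * s * t \<noteq> 0)"

definition F_set :: "'a::{semigroup_mult,mult_zero} \<Rightarrow> 'a set" where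
  "F_set s = {x. x \<noteq> 0 \<and> s * x \<noteq> 0}"

definition E_set :: "'a::{semigroup_mult,mult_zero} \<Rightarrow> 'a set" where
  "E_set s = (\<lambda>x. s * x) ` UNIV - {0}"

definition theta :: "'a::{semigroup_mult,mult_zero} \<Rightarrow> ('a \<rightharpoonup> 'a)" where
  "theta s = (\<lambda>x. if x \<in> F_set s then Some (s * x) else None)"

definition pinv :: "('a \<rightharpoonup> 'a) \<Rightarrow> ('a \<rightharpoonup> 'a)" where
  "pinv f = (\<lambda>y. if \<exists>x. f x = Some y then Some (THE x. f x = Some y) else None)"

inductive_set inverse_hull :: "('a::{semigroup_mult,mult_zero} \<rightharpoonup> 'a) set" where
  gen: "theta s \<in> inverse_hull"
| comp: "f \<in> inverse_hull \<Longrightarrow> g \<in> inverse_hull \<Longrightarrow> (f \<circ>\<^sub>m g) \<in> inverse_hull"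
| inv: "f \<in> inverse_hull \<Longrightarrow> pinv f \<in> inverse_hull"

definition pid :: "'a set \<Rightarrow> ('a \<rightharpoonup> 'a)" where
  "pid X = (\<lambda>x. if x \<in> X then Some x else None)"

definition theta_constructible :: "'a::{semigroup_mult,mult_zero} set \<Rightarrow> bool" where
  "theta_constructible X \<longleftrightarrow> X \<subseteq> - {0} \<and> pid X \<in> inverse_hull"

definition right_ideal :: "'a::{semigroup_mult,mult_zero} set \<Rightarrow> bool" where
  "right_ideal R \<longleftrightarrow> (\<forall>r\<in>R. \<forall>s. r * s \<in> R)"

end

theory Submission
  imports Defs
begin

text \<open>Every partial bijection in the inverse hull is injective and compatible with right
  multiplication: if it sends x to y, then xs and ys vanish together and, when nonzero, xs is
  sent to ys. The generators have this property because S is 0-left cancellative and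
  categorical at zero, and it survives composition and inversion. For the identity on a
  constructible set X it says that xs \<in> X whenever x \<in> X and xs \<noteq> 0, so X together with 0
  is a right ideal.\<close>

definition right_equivariant :: "('a::{semigroup_mult,mult_zero} \<rightharpoonup> 'a) \<Rightarrow> bool" where
  "right_equivariant f \<longleftrightarrow> (\<forall>x y. f x = Some y \<longrightarrow> x \<noteq> 0 \<and> y \<noteq> 0 \<and>
      (\<forall>s. (x * s \<noteq> 0 \<longleftrightarrow> y * s \<noteq> 0) \<and> (x * s \<noteq> 0 \<longrightarrow> f (x * s) = Some (y * s))))"

lemma right_equivariantD:
  assumes "right_equivariant f" and "f x = Some y"
  shows "x \<noteq> 0" "y \<noteq> 0" "x * s \<noteq> 0 \<longleftrightarrow> y * s \<noteq> 0" "x * s \<noteq> 0 \<Longrightarrow> f (x * s) = Some (y * s)"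
  using assms unfolding right_equivariant_def by blast+

lemma theta_Some_iff: "theta s x = Some y \<longleftrightarrow> x \<noteq> 0 \<and> s * x \<noteq> 0 \<and> y = s * x"
  by (auto simp: theta_def F_set_def)

lemma inj_theta:
  assumes "zero_left_cancellative TYPE('a::{semigroup_mult,mult_zero})"
  shows "inj_on (theta (s::'a)) (dom (theta s))"
proof (rule inj_onI)
  fix x x'
  assume "x \<in> dom (theta s)" and "theta s x = theta s x'"
  then obtain y where "theta s x = Some y" and "theta s x' = Some y" by (metis domD)
  then show "x = x'"
    using assms unfolding theta_Some_iff zero_left_cancellative_def by metis
qed

lemma right_equivariant_theta:
  assumes "categorical_at_zero TYPE('a::{semigroup_mult,mult_zero})"
  shows "right_equivariant (theta (s::'a))"
proof -
  have cat: "s * (x * t) = 0 \<longleftrightarrow> x * t = 0" if "s * x \<noteq> 0" for x t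
    using assms that unfolding categorical_at_zero_def by (metis mult.assoc mult_zero_right)
  show ?thesis
    unfolding right_equivariant_def theta_Some_iff
  proof (intro allI impI)
    fix x y
    assume "x \<noteq> 0 \<and> s * x \<noteq> 0 \<and> y = s * x"
    then show "x \<noteq> 0 \<and> y \<noteq> 0 \<and> (\<forall>t. (x * t \<noteq> 0 \<longleftrightarrow> y * t \<noteq> 0) \<and>
        (x * t \<noteq> 0 \<longrightarrow> x * t \<noteq> 0 \<and> s * (x * t) \<noteq> 0 \<and> y * t = s * (x * t)))"
      using cat by (metis mult.assoc)
  qed
qed

lemma inj_map_comp:
  assumes "inj_on f (dom f)" and "inj_on g (dom g)"
  shows "inj_on (f \<circ>\<^sub>m g) (dom (f \<circ>\<^sub>m g))"
proof (rule inj_onI)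
  fix x x'
  assume "x \<in> dom (f \<circ>\<^sub>m g)" and "(f \<circ>\<^sub>m g) x = (f \<circ>\<^sub>m g) x'"
  then obtain y where "(f \<circ>\<^sub>m g) x = Some y" and "(f \<circ>\<^sub>m g) x' = Some y"
    by (metis domD)
  then obtain z z' where "g x = Some z" "f z = Some y" "g x' = Some z'" "f z' = Some y"
    unfolding map_comp_Some_iff by blast
  then show "x = x'" using assms by (metis domI inj_onD)
qed

lemma right_equivariant_map_comp:
  assumes "right_equivariant f" and "right_equivariant g"
  shows "right_equivariant (f \<circ>\<^sub>m g)"
  unfolding right_equivariant_def map_comp_Some_iff
proof (intro allI impI)
  fix x y
  assume "\<exists>z. g x = Some z \<and> f z = Some y"
  then obtain z where gx: "g x = Some z" and fz: "f z = Some y" by blast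
  note G = right_equivariantD[OF assms(2) gx] and F = right_equivariantD[OF assms(1) fz]
  have "x * s \<noteq> 0 \<longleftrightarrow> y * s \<noteq> 0" for s
    using G(3) F(3) by simp
  moreover have "g (x * s) = Some (z * s) \<and> f (z * s) = Some (y * s)" if "x * s \<noteq> 0" for s
    using that G(3,4) F(4) by simp
  ultimately show "x \<noteq> 0 \<and> y \<noteq> 0 \<and> (\<forall>s. (x * s \<noteq> 0 \<longleftrightarrow> y * s \<noteq> 0) \<and>
      (x * s \<noteq> 0 \<longrightarrow> (\<exists>z. g (x * s) = Some z \<and> f z = Some (y * s))))"
    using G(1) F(2) by blast
qed

lemma The_Some_eq:
  assumes "inj_on f (dom f)" and "f x = Some y"
  shows "(THE x. f x = Some y) = x"
proof (rule the_equality)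
  fix x'
  assume "f x' = Some y"
  with assms show "x' = x" by (metis domI inj_onD)
qed (fact assms(2))

lemma pinv_Some_iff:
  assumes "inj_on f (dom f)"
  shows "pinv f y = Some x \<longleftrightarrow> f x = Some y"
proof
  assume "pinv f y = Some x"
  then obtain z where "f z = Some y" and "x = (THE x. f x = Some y)"
    by (auto simp: pinv_def split: if_splits)
  then show "f x = Some y" using The_Some_eq[OF assms] by simp
next
  assume "f x = Some y"
  then show "pinv f y = Some x" using The_Some_eq[OF assms] by (auto simp: pinv_def)
qed

lemma inj_pinv:
  assumes "inj_on f (dom f)"
  shows "inj_on (pinv f) (dom (pinv f))"
proof (rule inj_onI)
  fix y y'
  assume "y \<in> dom (pinv f)" and "pinv f y = pinv f y'"
  then obtain x where "pinv f y = Some x" and "pinv f y' = Some x" by (metis domD)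
  then show "y = y'" using pinv_Some_iff[OF assms] by simp
qed

lemma right_equivariant_pinv:
  assumes "inj_on f (dom f)" and "right_equivariant f"
  shows "right_equivariant (pinv f)"
  unfolding right_equivariant_def pinv_Some_iff[OF assms(1)]
  using right_equivariantD[OF assms(2)] by blast

text \<open>Injectivity is carried along the induction only because inversion needs it: on a
  non-injective map, pinv picks an unspecified THE-value.\<close>

lemma inverse_hull_inj_right_equivariant:
  assumes "zero_left_cancellative TYPE('a::{semigroup_mult,mult_zero})"
    and "categorical_at_zero TYPE('a)"
    and "f \<in> (inverse_hull :: ('a \<rightharpoonup> 'a) set)"
  shows "inj_on f (dom f) \<and> right_equivariant f"
  using assms(3)
proof induction
  case (gen s)
  show ?case using inj_theta[OF assms(1)] right_equivariant_theta[OF assms(2)] ..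
next
  case (comp f g)
  then show ?case using inj_map_comp right_equivariant_map_comp by blast
next
  case (inv f)
  then show ?case using inj_pinv right_equivariant_pinv by blast
qed

lemma right_equivariant_pid_closed:
  assumes "right_equivariant (pid X)" and "x \<in> X" and "x * s \<noteq> 0"
  shows "x * s \<in> X"
proof -
  have "pid X x = Some x" using assms(2) by (simp add: pid_def)
  then have "pid X (x * s) = Some (x * s)" using right_equivariantD(4)[OF assms(1)] assms(3) by blast
  then show ?thesis by (simp add: pid_def split: if_splits)
qed

theorem proposition4p4:
  assumes "zero_left_cancellative TYPE('a::{semigroup_mult,mult_zero})"
    and "categorical_at_zero TYPE('a)"
    and "theta_constructible (X :: 'a set)"
  shows "\<exists>R :: 'a set. right_ideal R \<and> 0 \<in> R \<and> X = R - {0}"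
proof (intro exI conjI)
  have "X \<subseteq> - {0}" and "pid X \<in> inverse_hull"
    using assms(3) by (auto simp: theta_constructible_def)
  then have "right_equivariant (pid X)"
    using inverse_hull_inj_right_equivariant[OF assms(1,2)] by blast
  then show "right_ideal (insert 0 X)"
    unfolding right_ideal_def using right_equivariant_pid_closed by fastforce
  show "X = insert 0 X - {0}" using \<open>X \<subseteq> - {0}\<close> by auto
qed simp

end
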